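(* With $TS$, $\Delta$ and $P'_w$ as below, if a configuration $s\in S$ is reachable in the reconfigurable broadcast network $RBN(TS)$ (i.e. there exist $\theta_0\in\Theta_0$, $\theta$ with $\theta_0\xrightarrow{*}\theta$ in $RBN(TS)$ and a vertex $v$ of $\theta$ with $L_\theta(v)=s$), then $s$ is reachable in $TS(P'_w)$.
   Context: Fix a finite alphabet $\Sigma$; let $\Sigma_b=\{!!a:a\in\Sigma\}$ and $\Sigma_r=\{??a:a\in\Sigma\}$. A labelled WSTS is a tuple $(S,\Lambda,S_0,R,\le)$ with $S$ a set of configurations, $\Lambda$ a finite alphabet, $S_0\subseteq S$ initial, $R\subseteq S\times\Lambda\times S$, and $\le$ a well-quasi-order on $S$ compatible with $R$: if $s_1\le t_1$ and $(s_1,a,s_2)\in R$ then there is $t_2$ with $(t_1,a,t_2)\in R$ and $s_2\le t_2$. A process is a labelled WSTS with $\Lambda=\Sigma_b\cup\Sigma_r$, given by a finite set $\Delta$ of labelled rules, each rule inducing transitions of $R$ with its label, $R$ being the union of these. For $\Delta'\subseteq\Delta$, $TS(\Delta')$ is the system with the same $S,S_0,\le$ but only transitions induced by rules in $\Delta'$ (assumed a labelled WSTS). For a rule $t$, $c_t$ is the finite set of $\le$-minimal configurations at which $t$ is enabled. $B_a$ (resp. $R_a$) is the set of rules labelled $!!a$ (resp. $??a$), $Rec=\bigcup_aR_a$. A configuration $c$ is coverable if some reachable $c'$ has $c'\ge c$. $P'_0=\Delta\setminus Rec$; for $i\ge1$, $AddT_i$ is the union of $R_a$ over letters $a$ not handled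 in earlier rounds such that some $t\in B_a$ has an element of $c_t$ coverable in $TS(P'_{i-1})$, and $P'_i=P'_{i-1}\cup AddT_i$; $P'_w$ is the final set, reached when no further rules are added. An $S$-graph is a finite undirected graph $(V,E,L)$ without self-loops with $L:V\to S$; $\Theta$ is the set of all such, $\Theta_0$ those with all labels in $S_0$. Broadcast step: $(V,E,L)\xrightarrow{a}(V,E,L')$ if some $v$ has $(L(v),!!a,L'(v))\in R$, every neighbour $u$ of $v$ has $(L(u),??a,L'(u))\in R$, and all other labels unchanged. Reconfiguration step: $(V,E,L)\to(V,E',L)$ for any edge set $E'$ on $V$ without self-loops. $RBN(TS)$ is the transition system on $\Theta$ with initial set $\Theta_0$ and both kinds of steps. *)

theory Defs
  imports Main
begin

datatype 'a lab = Bc 'a | Rc 'a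

text \<open>A process: configurations S (a set of 's), initial S0, quasi-order le, a finite set
  Delta of rules (of type 'r), each rule t with label lab t and induced transition
  relation tr t.\<close>

definition wqo_on :: "'s set \<Rightarrow> ('s \<Rightarrow> 's \<Rightarrow> bool) \<Rightarrow> bool" where
  "wqo_on S le \<longleftrightarrow>
     (\<forall>x\<in>S. le x x) \<and>
     (\<forall>x\<in>S. \<forall>y\<in>S. \<forall>z\<in>S. le x y \<longrightarrow> le y z \<longrightarrow> le x z) \<and>
     (\<forall>f::nat \<Rightarrow> 's. (\<forall>i. f i \<in> S) \<longrightarrow> (\<exists>i j. i < j \<and> le (f i) (f j)))"

definition ltrans :: "('r \<Rightarrow> 'a lab) \<Rightarrow> ('r \<Rightarrow> ('s \<times> 's) set) \<Rightarrow> 'r set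
    \<Rightarrow> ('s \<times> 'a lab \<times> 's) set" where
  "ltrans lab tr D = {(s, l, s'). \<exists>t\<in>D. lab t = l \<and> (s, s') \<in> tr t}"

definition step :: "('r \<Rightarrow> ('s \<times> 's) set) \<Rightarrow> 'r set \<Rightarrow> ('s \<times> 's) set" where
  "step tr D = {(s, s'). \<exists>t\<in>D. (s, s') \<in> tr t}"

definition labelled_wsts :: "'s set \<Rightarrow> 's set \<Rightarrow> ('s \<times> 'l \<times> 's) set
    \<Rightarrow> ('s \<Rightarrow> 's \<Rightarrow> bool) \<Rightarrow> bool" where
  "labelled_wsts S S0 R le \<longleftrightarrow>
     S0 \<subseteq> S \<and> (\<forall>(s, l, s') \<in> R. s \<in> S \<and> s' \<in> S) \<and> wqo_on S le \<and>
     (\<forall>s1 t1 a s2. s1 \<in> S \<longrightarrow> t1 \<in> S \<longrightarrow> le s1 t1 \<longrightarrow> (s1, a, s2) \<in> R \<longrightarrow>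
        (\<exists>t2. (t1, a, t2) \<in> R \<and> le s2 t2))"

definition reachable :: "'s set \<Rightarrow> ('r \<Rightarrow> ('s \<times> 's) set) \<Rightarrow> 'r set \<Rightarrow> 's \<Rightarrow> bool" where
  "reachable S0 tr D c \<longleftrightarrow> (\<exists>c0\<in>S0. (c0, c) \<in> (step tr D)\<^sup>*)"

definition coverable :: "'s set \<Rightarrow> ('s \<Rightarrow> 's \<Rightarrow> bool) \<Rightarrow> ('r \<Rightarrow> ('s \<times> 's) set)
    \<Rightarrow> 'r set \<Rightarrow> 's \<Rightarrow> bool" where
  "coverable S0 le tr D c \<longleftrightarrow> (\<exists>c'. reachable S0 tr D c' \<and> le c c')"

definition enabled :: "'s set \<Rightarrow> ('r \<Rightarrow> ('s \<times> 's) set) \<Rightarrow> 'r \<Rightarrow> 's set" where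
  "enabled S tr t = {s \<in> S. \<exists>s'. (s, s') \<in> tr t}"

definition cmin :: "'s set \<Rightarrow> ('s \<Rightarrow> 's \<Rightarrow> bool) \<Rightarrow> ('r \<Rightarrow> ('s \<times> 's) set) \<Rightarrow> 'r \<Rightarrow> 's set" where
  "cmin S le tr t = {s \<in> enabled S tr t. \<forall>s' \<in> enabled S tr t. le s' s \<longrightarrow> le s s'}"

definition Bset :: "'r set \<Rightarrow> ('r \<Rightarrow> 'a lab) \<Rightarrow> 'a \<Rightarrow> 'r set" where
  "Bset Delta lab a = {t \<in> Delta. lab t = Bc a}"

definition Rset :: "'r set \<Rightarrow> ('r \<Rightarrow> 'a lab) \<Rightarrow> 'a \<Rightarrow> 'r set" where
  "Rset Delta lab a = {t \<in> Delta. lab t = Rc a}"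

definition Rec :: "'r set \<Rightarrow> ('r \<Rightarrow> 'a lab) \<Rightarrow> 'r set" where
  "Rec Delta lab = (\<Union>a. Rset Delta lab a)"

text \<open>The saturation P'_i. The state is (P'_i, letters handled so far).\<close>
fun Pstate :: "'s set \<Rightarrow> 's set \<Rightarrow> ('s \<Rightarrow> 's \<Rightarrow> bool) \<Rightarrow> 'r set \<Rightarrow> ('r \<Rightarrow> 'a lab)
    \<Rightarrow> ('r \<Rightarrow> ('s \<times> 's) set) \<Rightarrow> nat \<Rightarrow> 'r set \<times> 'a set" where
  "Pstate S S0 le Delta lab tr 0 = (Delta - Rec Delta lab, {})"
| "Pstate S S0 le Delta lab tr (Suc i) =
     (let (P, H) = Pstate S S0 le Delta lab tr i;
          N = {a. a \<notin> H \<and> (\<exists>t \<in> Bset Delta lab a. \<exists>c \<in> cmin S le tr t.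
                                   coverable S0 le tr P c)}
      in (P \<union> (\<Union>a\<in>N. Rset Delta lab a), H \<union> N))"

definition Pi :: "'s set \<Rightarrow> 's set \<Rightarrow> ('s \<Rightarrow> 's \<Rightarrow> bool) \<Rightarrow> 'r set \<Rightarrow> ('r \<Rightarrow> 'a lab)
    \<Rightarrow> ('r \<Rightarrow> ('s \<times> 's) set) \<Rightarrow> nat \<Rightarrow> 'r set" where
  "Pi S S0 le Delta lab tr i = fst (Pstate S S0 le Delta lab tr i)"

text \<open>P'_w: the final set. The chain P'_i is increasing and stabilises once no rule is
  added; its limit is the union of the chain.\<close>
definition Pw :: "'s set \<Rightarrow> 's set \<Rightarrow> ('s \<Rightarrow> 's \<Rightarrow> bool) \<Rightarrow> 'r set \<Rightarrow> ('r \<Rightarrow> 'a lab)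
    \<Rightarrow> ('r \<Rightarrow> ('s \<times> 's) set) \<Rightarrow> 'r set" where
  "Pw S S0 le Delta lab tr = (\<Union>i. Pi S S0 le Delta lab tr i)"

type_synonym ('v, 's) sgraph = "'v set \<times> ('v \<times> 'v) set \<times> ('v \<Rightarrow> 's)"

definition edge_set_on :: "'v set \<Rightarrow> ('v \<times> 'v) set \<Rightarrow> bool" where
  "edge_set_on V E \<longleftrightarrow> E \<subseteq> V \<times> V \<and> sym E \<and> (\<forall>v. (v, v) \<notin> E)"

definition sgraph :: "'s set \<Rightarrow> ('v, 's) sgraph \<Rightarrow> bool" where
  "sgraph S G \<longleftrightarrow> (case G of (V, E, L) \<Rightarrow>
      finite V \<and> edge_set_on V E \<and> (\<forall>v\<in>V. L v \<in> S))"

definition Theta0 :: "'s set \<Rightarrow> 's set \<Rightarrow> ('v, 's) sgraph set" where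
  "Theta0 S S0 = {G. sgraph S G \<and> (case G of (V, E, L) \<Rightarrow> (\<forall>v\<in>V. L v \<in> S0))}"

definition rbn_step :: "'s set \<Rightarrow> ('s \<times> 'a lab \<times> 's) set \<Rightarrow> (('v, 's) sgraph \<times> ('v, 's) sgraph) set" where
  "rbn_step S R = {(G, G'). sgraph S G \<and> sgraph S G' \<and>
     (case G of (V, E, L) \<Rightarrow> case G' of (V', E', L') \<Rightarrow> V' = V \<and>
       ((E' = E \<and> (\<exists>a. \<exists>v\<in>V. (L v, Bc a, L' v) \<in> R \<and>
             (\<forall>u. (v, u) \<in> E \<longrightarrow> (L u, Rc a, L' u) \<in> R) \<and>
             (\<forall>u. u \<noteq> v \<longrightarrow> (v, u) \<notin> E \<longrightarrow> L' u = L u)))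
        \<or> (L' = L \<and> edge_set_on V E')))}"

end

theory Submission
  imports Defs
begin

text \<open>Broadcast rules belong to P'_0. When a broadcast rule for a letter a fires at a
  configuration x reachable in TS(P'_w), then x is already reachable in some TS(P'_i), and since
  the order is a wqo, x lies above a minimal configuration of the rule, which is therefore
  coverable in TS(P'_i); hence all receptions of a are added in round i + 1. So every move of an
  RBN step is simulated by a rule of P'_w, and induction over the RBN run gives the claim.\<close>

lemma reachable_step:
  assumes "reachable S0 tr D x" and "t \<in> D" and "(x, y) \<in> tr t"
  shows "reachable S0 tr D y"
  using assms unfolding reachable_def step_def by (blast intro: rtrancl_into_rtrancl)

lemma reachable_UN_chain:
  fixes D :: "nat \<Rightarrow> 'r set"
  assumes "mono D" and "reachable S0 tr (\<Union>i. D i) c"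
  shows "\<exists>i. reachable S0 tr (D i) c"
proof -
  obtain c0 where c0: "c0 \<in> S0" and run: "(c0, c) \<in> (step tr (\<Union>i. D i))\<^sup>*"
    using assms(2) unfolding reachable_def by blast
  from run have "\<exists>i. (c0, c) \<in> (step tr (D i))\<^sup>*"
  proof (induction rule: rtrancl_induct)
    case base
    then show ?case by blast
  next
    case (step y z)
    then obtain i where i: "(c0, y) \<in> (step tr (D i))\<^sup>*" by blast
    obtain j t where t: "t \<in> D j" "(y, z) \<in> tr t"
      using step.hyps(2) unfolding step_def by blast
    have "D i \<subseteq> D (max i j)" "D j \<subseteq> D (max i j)"
      using \<open>mono D\<close> by (simp_all add: monoD)
    then have "(c0, y) \<in> (step tr (D (max i j)))\<^sup>*" "(y, z) \<in> step tr (D (max i j))"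
      using i t rtrancl_mono[of "step tr (D i)" "step tr (D (max i j))"]
      unfolding step_def by blast+
    then show ?case by (blast intro: rtrancl_into_rtrancl)
  qed
  with c0 show ?thesis unfolding reachable_def by blast
qed

lemma wqo_on_reflD:
  assumes "wqo_on S le" and "x \<in> S"
  shows "le x x"
  using conjunct1[OF assms(1)[unfolded wqo_on_def]] assms(2) by blast

lemma wqo_on_transD:
  assumes "wqo_on S le" and "x \<in> S" "y \<in> S" "z \<in> S" and "le x y" "le y z"
  shows "le x z"
  using conjunct1[OF conjunct2[OF assms(1)[unfolded wqo_on_def]]] assms(2-6) by blast

lemma wqo_on_goodD:
  fixes f :: "nat \<Rightarrow> 's"
  assumes "wqo_on S le" and "\<And>i. f i \<in> S"
  shows "\<exists>i j. i < j \<and> le (f i) (f j)"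
  using spec[OF conjunct2[OF conjunct2[OF assms(1)[unfolded wqo_on_def]]], of f] assms(2)
  by simp

lemma wqo_on_wf_strict:
  assumes "wqo_on S le"
  shows "wf {(x, y). x \<in> S \<and> y \<in> S \<and> le x y \<and> \<not> le y x}"
proof (unfold wf_iff_no_infinite_down_chain, rule notI, elim exE)
  fix f assume "\<forall>i. (f (Suc i), f i) \<in> {(x, y). x \<in> S \<and> y \<in> S \<and> le x y \<and> \<not> le y x}"
  then have fS: "f i \<in> S" and desc: "le (f (Suc i)) (f i)" and strict: "\<not> le (f i) (f (Suc i))" for i
    by simp_all
  have below: "le (f n) (f m)" if "m \<le> n" for m n
    using that
  proof (rule transitive_stepwise_le[where R = "\<lambda>m n. le (f n) (f m)"])
    show "le (f x) (f x)" for x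
      using wqo_on_reflD[OF assms fS] .
    show "le (f z) (f x)" if "le (f y) (f x)" "le (f z) (f y)" for x y z
      using wqo_on_transD[OF assms fS fS fS that(2,1)] .
  qed (rule desc)
  obtain i j where "i < j" "le (f i) (f j)"
    using wqo_on_goodD[OF assms fS] by blast
  moreover have "le (f j) (f (Suc i))"
    using below \<open>i < j\<close> by (simp add: Suc_leI)
  ultimately have "le (f i) (f (Suc i))"
    using wqo_on_transD[OF assms fS fS fS] by blast
  with strict show False by blast
qed

lemma wqo_on_minimal_below:
  assumes "wqo_on S le" and "A \<subseteq> S" and "x \<in> A"
  shows "\<exists>c\<in>A. le c x \<and> (\<forall>y\<in>A. le y c \<longrightarrow> le c y)"
proof -
  let ?B = "{c \<in> A. le c x}"
  have x: "x \<in> ?B"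
    using assms(2,3) wqo_on_reflD[OF assms(1)] by blast
  obtain c where c: "c \<in> ?B"
    and min: "\<And>y. (y, c) \<in> {(x, y). x \<in> S \<and> y \<in> S \<and> le x y \<and> \<not> le y x} \<Longrightarrow> y \<notin> ?B"
    using wfE_min[OF wqo_on_wf_strict[OF assms(1)] x] by blast
  have "le c y" if "y \<in> A" "le y c" for y
  proof -
    have "le y x"
      using wqo_on_transD[OF assms(1), of y c x] that c assms(2,3) by blast
    then show ?thesis
      using min[of y] that c assms(2) by blast
  qed
  with c show ?thesis by blast
qed

lemma cmin_below:
  assumes "wqo_on S le" and "x \<in> enabled S tr t"
  shows "\<exists>c\<in>cmin S le tr t. le c x"
  using wqo_on_minimal_below[OF assms(1) _ assms(2)]
  unfolding cmin_def by (auto simp: enabled_def)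

lemma mono_Pi: "mono (Pi S S0 le Delta lab tr)"
  unfolding mono_iff_le_Suc Pi_def
  by (auto simp: Let_def split: prod.split)

lemma Pi_subset_Pw: "Pi S S0 le Delta lab tr i \<subseteq> Pw S S0 le Delta lab tr"
  unfolding Pw_def by blast

lemma Rset_subset_Pstate:
  "a \<in> snd (Pstate S S0 le Delta lab tr i) \<Longrightarrow> Rset Delta lab a \<subseteq> fst (Pstate S S0 le Delta lab tr i)"
  by (induction i arbitrary: a) (auto simp: Let_def split: prod.splits)

lemma Rset_subset_Pi_Suc:
  assumes "t \<in> Bset Delta lab a" and "c \<in> cmin S le tr t"
    and "coverable S0 le tr (Pi S S0 le Delta lab tr i) c"
  shows "Rset Delta lab a \<subseteq> Pi S S0 le Delta lab tr (Suc i)"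
proof -
  obtain P H where PH: "Pstate S S0 le Delta lab tr i = (P, H)"
    by fastforce
  show ?thesis
  proof (cases "a \<in> H")
    case True
    then have "Rset Delta lab a \<subseteq> Pi S S0 le Delta lab tr i"
      using Rset_subset_Pstate[of a S S0 le Delta lab tr i] PH by (simp add: Pi_def)
    then show ?thesis
      using mono_Pi[of S S0 le Delta lab tr] by (meson lessI less_imp_le monoD order_trans)
  next
    case False
    with assms PH show ?thesis
      by (auto simp: Pi_def Let_def)
  qed
qed

lemma Bset_subset_Pw: "Bset Delta lab a \<subseteq> Pw S S0 le Delta lab tr"
  using Pi_subset_Pw[of S S0 le Delta lab tr 0]
  by (auto simp: Pi_def Bset_def Rec_def Rset_def)

lemma Rset_subset_Pw_if_broadcast_enabled:
  assumes "wqo_on S le" and "tb \<in> Bset Delta lab a"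
    and "x \<in> S" and "reachable S0 tr (Pw S S0 le Delta lab tr) x" and "(x, x') \<in> tr tb"
  shows "Rset Delta lab a \<subseteq> Pw S S0 le Delta lab tr"
proof -
  obtain i where i: "reachable S0 tr (Pi S S0 le Delta lab tr i) x"
    using reachable_UN_chain[OF mono_Pi assms(4)[unfolded Pw_def]] by blast
  have "x \<in> enabled S tr tb"
    using assms(3,5) unfolding enabled_def by blast
  then have "\<exists>c\<in>cmin S le tr tb. le c x"
    by (rule cmin_below[OF assms(1)])
  then obtain c where c: "c \<in> cmin S le tr tb" and "le c x" ..
  with i have "coverable S0 le tr (Pi S S0 le Delta lab tr i) c"
    unfolding coverable_def by blast
  then have "Rset Delta lab a \<subseteq> Pi S S0 le Delta lab tr (Suc i)"
    by (rule Rset_subset_Pi_Suc[OF assms(2) c])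
  then show ?thesis
    using Pi_subset_Pw by (rule order_trans)
qed

lemma rbn_step_preserves_reachable_labels:
  assumes step: "((V, E, L), (V', E', L')) \<in> rbn_step S (ltrans lab tr Delta)"
    and broadcasts: "\<And>a. Bset Delta lab a \<subseteq> P"
    and receptions: "\<And>a tb x x'. tb \<in> Bset Delta lab a \<Longrightarrow> x \<in> S \<Longrightarrow> reachable S0 tr P x \<Longrightarrow>
      (x, x') \<in> tr tb \<Longrightarrow> Rset Delta lab a \<subseteq> P"
    and reach: "\<forall>w\<in>V. reachable S0 tr P (L w)"
  shows "\<forall>w\<in>V'. reachable S0 tr P (L' w)"
proof -
  have LS: "\<forall>w\<in>V. L w \<in> S" and "V' = V"
    using step unfolding rbn_step_def sgraph_def by auto
  consider (reconf) "L' = L"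
    | (broadcast) a v where "v \<in> V" "(L v, Bc a, L' v) \<in> ltrans lab tr Delta"
        "\<forall>u. (v, u) \<in> E \<longrightarrow> (L u, Rc a, L' u) \<in> ltrans lab tr Delta"
        "\<forall>u. u \<noteq> v \<longrightarrow> (v, u) \<notin> E \<longrightarrow> L' u = L u"
    using step unfolding rbn_step_def by auto
  then show ?thesis
  proof cases
    case reconf
    with reach \<open>V' = V\<close> show ?thesis by simp
  next
    case (broadcast a v)
    obtain tb where tb: "tb \<in> Bset Delta lab a" "(L v, L' v) \<in> tr tb"
      using broadcast(2) unfolding ltrans_def Bset_def by auto
    have Ra: "Rset Delta lab a \<subseteq> P"
      using receptions[OF tb(1) _ _ tb(2)] LS reach broadcast(1) by blast
    have "reachable S0 tr P (L' w)" if w: "w \<in> V" for w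
    proof -
      consider "w = v" | "(v, w) \<in> E" | "w \<noteq> v" "(v, w) \<notin> E" by blast
      then show ?thesis
      proof cases
        case 1
        then show ?thesis
          using reachable_step[of S0 tr P "L v" tb] reach broadcast(1) tb broadcasts by blast
      next
        case 2
        then obtain t where "t \<in> Rset Delta lab a" "(L w, L' w) \<in> tr t"
          using broadcast(3) unfolding ltrans_def Rset_def by auto
        then show ?thesis
          using reachable_step[of S0 tr P "L w" t] reach w Ra by blast
      next
        case 3
        then show ?thesis using broadcast(4) reach w by auto
      qed
    qed
    with \<open>V' = V\<close> show ?thesis by blast
  qed
qed

lemma rbn_reachable_labels:
  assumes "theta0 \<in> Theta0 S S0"
    and "(theta0, theta) \<in> (rbn_step S (ltrans lab tr Delta))\<^sup>*"
    and broadcasts: "\<And>a. Bset Delta lab a \<subseteq> P"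
    and receptions: "\<And>a tb x x'. tb \<in> Bset Delta lab a \<Longrightarrow> x \<in> S \<Longrightarrow> reachable S0 tr P x \<Longrightarrow>
      (x, x') \<in> tr tb \<Longrightarrow> Rset Delta lab a \<subseteq> P"
  shows "\<forall>w\<in>fst theta. reachable S0 tr P (snd (snd theta) w)"
  using assms(2)
proof (induction rule: rtrancl_induct)
  case base
  with assms(1) show ?case
    unfolding Theta0_def reachable_def by (auto split: prod.splits)
next
  case (step G G')
  obtain V E L V' E' L' where "G = (V, E, L)" "G' = (V', E', L')"
    by (metis prod.exhaust)
  with step rbn_step_preserves_reachable_labels[OF _ broadcasts receptions]
  show ?case by simp
qed

theorem lemma11:
  fixes S S0 :: "'s set"
    and le :: "'s \<Rightarrow> 's \<Rightarrow> bool"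
    and Delta :: "'r set"
    and lab :: "'r \<Rightarrow> ('a::finite) lab"
    and tr :: "'r \<Rightarrow> ('s \<times> 's) set"
    and theta0 theta :: "('v, 's) sgraph"
    and v :: 'v and s :: 's
  assumes "finite Delta"
    and "\<And>D. D \<subseteq> Delta \<Longrightarrow> labelled_wsts S S0 (ltrans lab tr D) le"
    and "theta0 \<in> Theta0 S S0"
    and "(theta0, theta) \<in> (rbn_step S (ltrans lab tr Delta))\<^sup>*"
    and "v \<in> fst theta"
    and "snd (snd theta) v = s"
  shows "reachable S0 tr (Pw S S0 le Delta lab tr) s"
proof -
  have wqo: "wqo_on S le"
    using assms(2)[of Delta] unfolding labelled_wsts_def by blast
  have "\<forall>w\<in>fst theta. reachable S0 tr (Pw S S0 le Delta lab tr) (snd (snd theta) w)"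
    using rbn_reachable_labels[OF assms(3,4) Bset_subset_Pw
        Rset_subset_Pw_if_broadcast_enabled[OF wqo]] .
  with assms(5,6) show ?thesis by blast
qed

end
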